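(* Let $A_{\mathbbm{1}}$ be the matrix of the quadratic form $q_{\mathbbm{1}}$ on the space of polynomials of degree at most $1$ on $\mathbb{R}^{n(n-1)/2}$, in the monomial basis $\{1\}\cup\{x_{ij}\}$, where $\mathbbm{1}(x)=1$ for all $x\in X$; identify a polynomial of degree at most $1$ with its coefficient vector. Then for any $1\le i\le n$, $2-\sum_{j\ne i}x_{ij}$ is an eigenvector of $A_{\mathbbm{1}}$ with eigenvalue $0$, and for any distinct $\alpha,\beta,\gamma,\delta\in\{1,\dotsc,n\}$, $x_{\alpha\beta}-x_{\beta\gamma}+x_{\gamma\delta}-x_{\delta\alpha}$ is an eigenvector of $A_{\mathbbm{1}}$ with eigenvalue $\frac{2}{n-1}$.
   Context: Let $N=n(n-1)/2$, coordinates of $\mathbb{R}^N$ indexed by unordered pairs $\{i,j\}$ of distinct elements of $\{1,\dotsc,n\}$, written $x_{ij}=x_{ji}$. Let $X\subset\mathbb{R}^N$ be the set of incidence vectors of Hamiltonian cycles of $K_n$. For $f:X\to\mathbb{R}$, $q_f(h)=\frac{1}{|X|}\sum_{x\in X}f(x)h(x)^2$, and its matrix in the monomial basis has entry indexed by monomials $\mu,\nu$ equal to $\frac{1}{|X|}\sum_{x\in X}f(x)\mu(x)\nu(x)$. *)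

theory Defs
  imports Complex_Main
begin

text \<open>Coordinates of R^N are indexed by unordered pairs {i,j}, i \<noteq> j in {1..n},
  represented as two-element sets of naturals.\<close>

definition edges :: "nat \<Rightarrow> nat set set" where
  "edges n = {{i, j} | i j. i \<in> {1..n} \<and> j \<in> {1..n} \<and> i \<noteq> j}"

definition is_ham_cycle :: "nat \<Rightarrow> nat set set \<Rightarrow> bool" where
  "is_ham_cycle n C \<longleftrightarrow> 3 \<le> n \<and> (\<exists>vs. distinct vs \<and> set vs = {1..n} \<and>
      C = {{vs ! k, vs ! (Suc k mod n)} | k. k < n})"

definition incidence :: "nat set set \<Rightarrow> (nat set \<Rightarrow> real)" where
  "incidence C = (\<lambda>e. if e \<in> C then 1 else 0)"

text \<open>X: the set of incidence vectors of Hamiltonian cycles of K_n.\<close>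
definition HC :: "nat \<Rightarrow> (nat set \<Rightarrow> real) set" where
  "HC n = incidence ` {C. is_ham_cycle n C}"

text \<open>Monomials of degree at most 1: the empty set stands for the monomial 1,
  an edge {i,j} for the monomial x_ij.\<close>
definition monomials :: "nat \<Rightarrow> nat set set" where
  "monomials n = insert {} (edges n)"

definition mono_eval :: "nat set \<Rightarrow> (nat set \<Rightarrow> real) \<Rightarrow> real" where
  "mono_eval \<mu> x = (if \<mu> = {} then 1 else x \<mu>)"

definition qmat :: "nat \<Rightarrow> ((nat set \<Rightarrow> real) \<Rightarrow> real) \<Rightarrow> nat set \<Rightarrow> nat set \<Rightarrow> real" where
  "qmat n f \<mu> \<nu> = (1 / real (card (HC n))) * (\<Sum>x\<in>HC n. f x * mono_eval \<mu> x * mono_eval \<nu> x)"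

definition A_one :: "nat \<Rightarrow> nat set \<Rightarrow> nat set \<Rightarrow> real" where
  "A_one n = qmat n (\<lambda>_. 1)"

definition is_eigenvector :: "nat \<Rightarrow> (nat set \<Rightarrow> nat set \<Rightarrow> real) \<Rightarrow> (nat set \<Rightarrow> real) \<Rightarrow> real \<Rightarrow> bool" where
  "is_eigenvector n A v lam \<longleftrightarrow> (\<exists>\<mu>\<in>monomials n. v \<mu> \<noteq> 0) \<and>
     (\<forall>\<mu>\<in>monomials n. (\<Sum>\<nu>\<in>monomials n. A \<mu> \<nu> * v \<nu>) = lam * v \<mu>)"

text \<open>Coefficient vector of 2 - sum_{j \<noteq> i} x_ij.\<close>
definition vstar :: "nat \<Rightarrow> nat \<Rightarrow> nat set \<Rightarrow> real" where
  "vstar n i = (\<lambda>\<mu>. if \<mu> = {} then 2 else if \<mu> \<in> edges n \<and> i \<in> \<mu> then -1 else 0)"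

text \<open>Coefficient vector of x_ab - x_bc + x_cd - x_da.\<close>
definition vsquare :: "nat \<Rightarrow> nat \<Rightarrow> nat \<Rightarrow> nat \<Rightarrow> nat set \<Rightarrow> real" where
  "vsquare a b c d = (\<lambda>\<mu>. (if \<mu> = {a, b} then 1 else 0) - (if \<mu> = {b, c} then 1 else 0)
      + (if \<mu> = {c, d} then 1 else 0) - (if \<mu> = {d, a} then 1 else 0))"

end

theory Submission
  imports Defs "HOL-Combinatorics.Permutations"
begin

(* Applying A_1 to the coefficient vector of a polynomial p of degree at most 1 gives, in the
   entry of the monomial m, the average of m(x) p(x) over the Hamiltonian cycles x.  For
   p = 2 - sum_j x_ij this vanishes because every vertex has degree 2 in a Hamiltonian cycle.
   For p = x_ab - x_bc + x_cd - x_da, the transpositions (a c) and (b d) permute the Hamiltonian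
   cycles and change the sign of p, so the entry vanishes at every monomial fixed by one of them
   and is determined by its value at x_ab on the remaining ones.  That value follows by double
   counting the cycle edges at a vertex: an edge lies in 2|X|/(n-1) cycles, and a fraction
   1/(n-2) resp. 2/(n-2) of these also contain a given adjacent resp. disjoint edge. *)

lemma length_le_if_distinct_subset: "distinct xs \<Longrightarrow> set xs \<subseteq> {1..n} \<Longrightarrow> length xs \<le> n"
  by (metis card_atLeastAtMost card_mono diff_Suc_1 distinct_card finite_atLeastAtMost)

definition ham_cycles :: "nat \<Rightarrow> nat set set set" where
  "ham_cycles n = {C. is_ham_cycle n C}"

definition relabel :: "('a \<Rightarrow> 'b) \<Rightarrow> 'a set set \<Rightarrow> 'b set set" where
  "relabel \<pi> C = image \<pi> ` C"

lemma is_ham_cycle_iff: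
  "is_ham_cycle n C \<longleftrightarrow> 3 \<le> n \<and> (\<exists>vs. distinct vs \<and> set vs = {1..n} \<and>
     C = (\<lambda>k. {vs ! k, vs ! (Suc k mod n)}) ` {..<n})"
  by (simp add: is_ham_cycle_def setcompr_eq_image lessThan_def)

lemma is_ham_cycleI:
  "3 \<le> n \<Longrightarrow> distinct vs \<Longrightarrow> set vs = {1..n} \<Longrightarrow>
    is_ham_cycle n ((\<lambda>k. {vs ! k, vs ! (Suc k mod n)}) ` {..<n})"
  by (auto simp: is_ham_cycle_iff)

lemma is_ham_cycleE:
  assumes "is_ham_cycle n C"
  obtains vs where "3 \<le> n" "distinct vs" "set vs = {1..n}" "length vs = n"
    "C = (\<lambda>k. {vs ! k, vs ! (Suc k mod n)}) ` {..<n}"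
  using assms distinct_card by (fastforce simp: is_ham_cycle_iff)

lemma finite_ham_cycles: "finite (ham_cycles n)"
proof (rule finite_subset)
  show "ham_cycles n \<subseteq> Pow (Pow {1..n})"
  proof
    fix C assume "C \<in> ham_cycles n"
    then obtain vs where vs: "set vs = {1..n}" "length vs = n"
      and C_eq: "C = (\<lambda>k. {vs ! k, vs ! (Suc k mod n)}) ` {..<n}"
      unfolding ham_cycles_def by (auto elim: is_ham_cycleE)
    have "{vs ! k, vs ! (Suc k mod n)} \<subseteq> {1..n}" if "k < n" for k
      using that vs nth_mem[of k vs] nth_mem[of "Suc k mod n" vs] by auto
    then show "C \<in> Pow (Pow {1..n})" unfolding C_eq by blast
  qed
qed simp

lemma ham_cycles_nonempty:
  assumes "3 \<le> n"
  shows "ham_cycles n \<noteq> {}"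
proof -
  have "is_ham_cycle n ((\<lambda>k. {[1..<Suc n] ! k, [1..<Suc n] ! (Suc k mod n)}) ` {..<n})"
    by (rule is_ham_cycleI)
      (use assms in \<open>simp_all only: set_upt distinct_upt atLeastLessThanSuc_atLeastAtMost\<close>)
  then show ?thesis unfolding ham_cycles_def by blast
qed

lemma is_ham_cycle_relabel:
  assumes \<pi>: "\<pi> permutes {1..n}" and C: "is_ham_cycle n C"
  shows "is_ham_cycle n (relabel \<pi> C)"
proof -
  obtain vs where vs: "3 \<le> n" "distinct vs" "set vs = {1..n}" "length vs = n"
    and C_eq: "C = (\<lambda>k. {vs ! k, vs ! (Suc k mod n)}) ` {..<n}"
    using C by (rule is_ham_cycleE)
  have "relabel \<pi> C = (\<lambda>k. {map \<pi> vs ! k, map \<pi> vs ! (Suc k mod n)}) ` {..<n}"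
    unfolding relabel_def C_eq image_image using vs by (intro image_cong) auto
  moreover have "distinct (map \<pi> vs)" "set (map \<pi> vs) = {1..n}"
    using vs permutes_inj_on[OF \<pi>] permutes_image[OF \<pi>] by (simp_all add: distinct_map)
  ultimately show ?thesis using is_ham_cycleI vs(1) by metis
qed

lemma relabel_id: "relabel id C = C"
  by (simp add: relabel_def)

lemma relabel_relabel: "relabel \<sigma> (relabel \<pi> C) = relabel (\<sigma> \<circ> \<pi>) C"
  by (simp add: relabel_def image_image image_comp)

lemma image_mem_relabel_iff: "inj \<pi> \<Longrightarrow> \<pi> ` e \<in> relabel \<pi> C \<longleftrightarrow> e \<in> C"
  by (auto simp: relabel_def inj_image_eq_iff)

lemma sum_ham_cycles_relabel:
  assumes \<pi>: "\<pi> permutes {1..n}"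
  shows "(\<Sum>C\<in>ham_cycles n. g (relabel \<pi> C)) = (\<Sum>C\<in>ham_cycles n. g C)"
proof (rule sum.reindex_bij_witness[where i = "relabel (inv \<pi>)" and j = "relabel \<pi>"])
  fix C
  show "relabel (inv \<pi>) (relabel \<pi> C) = C" "relabel \<pi> (relabel (inv \<pi>) C) = C"
    by (simp_all add: relabel_relabel permutes_inv_o[OF \<pi>] relabel_id)
  show "C \<in> ham_cycles n \<Longrightarrow> relabel \<pi> C \<in> ham_cycles n"
       "C \<in> ham_cycles n \<Longrightarrow> relabel (inv \<pi>) C \<in> ham_cycles n"
    using is_ham_cycle_relabel \<pi> permutes_inv[OF \<pi>] unfolding ham_cycles_def by blast+
qed simp

lemma cycle_neighbours:
  assumes vs: "distinct vs" "length vs = n" and n: "3 \<le> n" and k: "k < n"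
  obtains u w where "u \<noteq> w" "u \<in> set vs - {vs ! k}" "w \<in> set vs - {vs ! k}"
    "{j. {vs ! k, j} \<in> (\<lambda>m. {vs ! m, vs ! (Suc m mod n)}) ` {..<n}} = {u, w}"
proof -
  define succ pred where "succ = Suc k mod n" and "pred = (if k = 0 then n - 1 else k - 1)"
  have pred_iff: "Suc m mod n = k \<longleftrightarrow> m = pred" if "m < n" for m
    using that k n unfolding pred_def by (auto simp: mod_Suc)
  have indices: "succ < n" "pred < n" "succ \<noteq> k" "pred \<noteq> k" "succ \<noteq> pred"
    using k n unfolding succ_def pred_def by (auto simp: mod_Suc)
  have nth_eq_iff: "vs ! x = vs ! y \<longleftrightarrow> x = y" if "x < n" "y < n" for x y
    using nth_eq_iff_index_eq[OF vs(1)] that vs(2) by simp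
  have "{vs ! k, j} \<in> (\<lambda>m. {vs ! m, vs ! (Suc m mod n)}) ` {..<n}
      \<longleftrightarrow> (\<exists>m<n. (vs ! k = vs ! m \<and> j = vs ! (Suc m mod n)) \<or>
                (vs ! k = vs ! (Suc m mod n) \<and> j = vs ! m))" for j
    unfolding image_iff Bex_def lessThan_iff doubleton_eq_iff by (rule refl)
  also have "\<dots> j \<longleftrightarrow> (\<exists>m<n. (m = k \<and> j = vs ! succ) \<or> (m = pred \<and> j = vs ! m))" for j
  proof (intro ex_cong1 conj_cong refl)
    fix m assume "m < n"
    then have "vs ! k = vs ! m \<longleftrightarrow> m = k" "vs ! k = vs ! (Suc m mod n) \<longleftrightarrow> m = pred"
      using nth_eq_iff[of k m] nth_eq_iff[of k "Suc m mod n"] pred_iff[of m] k by auto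
    then show "(vs ! k = vs ! m \<and> j = vs ! (Suc m mod n) \<or> vs ! k = vs ! (Suc m mod n) \<and> j = vs ! m)
        \<longleftrightarrow> (m = k \<and> j = vs ! succ \<or> m = pred \<and> j = vs ! m)"
      unfolding succ_def by auto
  qed
  finally have "{j. {vs ! k, j} \<in> (\<lambda>m. {vs ! m, vs ! (Suc m mod n)}) ` {..<n}} = {vs ! succ, vs ! pred}"
    using indices k by auto
  moreover have "vs ! succ \<noteq> vs ! pred" using indices nth_eq_iff by simp
  moreover have "vs ! succ \<in> set vs - {vs ! k}" "vs ! pred \<in> set vs - {vs ! k}"
    using indices nth_eq_iff[of succ k] nth_eq_iff[of pred k] k vs(2) by auto
  ultimately show thesis using that by blast
qed

lemma ham_cycle_degree:
  assumes C: "is_ham_cycle n C" and i: "i \<in> {1..n}"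
  shows "card {j \<in> {1..n} - {i}. {i, j} \<in> C} = 2"
proof -
  obtain vs where n: "3 \<le> n" and vs: "distinct vs" "set vs = {1..n}" "length vs = n"
    and C_eq: "C = (\<lambda>k. {vs ! k, vs ! (Suc k mod n)}) ` {..<n}"
    using C by (rule is_ham_cycleE)
  obtain k where k: "k < n" "vs ! k = i" using i vs by (metis in_set_conv_nth)
  obtain u w where "u \<noteq> w" "u \<in> {1..n} - {i}" "w \<in> {1..n} - {i}" "{j. {i, j} \<in> C} = {u, w}"
    using cycle_neighbours[OF vs(1,3) n k(1)] unfolding C_eq k(2) vs(2) by blast
  then have "{j \<in> {1..n} - {i}. {i, j} \<in> C} = {u, w}" by blast
  then show ?thesis using \<open>u \<noteq> w\<close> by simp
qed

lemma of_nat_card_filter_eq_sum_of_bool: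
  "finite A \<Longrightarrow> of_nat (card {x \<in> A. P x}) = (\<Sum>x\<in>A. of_bool (P x) :: 'b::semiring_1)"
  by (simp add: Int_def)

definition edge_count :: "nat \<Rightarrow> nat set \<Rightarrow> nat" where
  "edge_count n e = card {C \<in> ham_cycles n. e \<in> C}"

definition pair_count :: "nat \<Rightarrow> nat set \<Rightarrow> nat set \<Rightarrow> nat" where
  "pair_count n e f = card {C \<in> ham_cycles n. e \<in> C \<and> f \<in> C}"

lemma pair_count_self: "pair_count n e e = edge_count n e"
  by (simp add: pair_count_def edge_count_def)

lemma card_ham_cycles_relabel:
  assumes "\<pi> permutes {1..n}"
  shows "card {C \<in> ham_cycles n. P (relabel \<pi> C)} = card {C \<in> ham_cycles n. P C}"
  using sum_ham_cycles_relabel[OF assms, of "\<lambda>C. of_bool (P C) :: nat"]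
  by (simp only: of_nat_id
      of_nat_card_filter_eq_sum_of_bool[OF finite_ham_cycles, where 'b = nat, symmetric])

lemma pair_count_relabel:
  assumes \<pi>: "\<pi> permutes {1..n}"
  shows "pair_count n (\<pi> ` e) (\<pi> ` f) = pair_count n e f"
  using card_ham_cycles_relabel[OF \<pi>, of "\<lambda>C. \<pi> ` e \<in> C \<and> \<pi> ` f \<in> C"]
  by (simp add: pair_count_def image_mem_relabel_iff permutes_inj[OF \<pi>])

lemma edge_count_relabel: "\<pi> permutes {1..n} \<Longrightarrow> edge_count n (\<pi> ` e) = edge_count n e"
  using pair_count_relabel[of \<pi> n e e] by (simp add: pair_count_self)

lemma sum_card_ham_cycles_through_vertex:
  assumes "i \<in> {1..n}"
  shows "(\<Sum>j\<in>{1..n} - {i}. card {C \<in> ham_cycles n. P C \<and> {i, j} \<in> C})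
    = 2 * card {C \<in> ham_cycles n. P C}"
proof -
  let ?H = "ham_cycles n" and ?N = "{1..n} - {i}"
  have "(\<Sum>j\<in>?N. card {C \<in> ?H. P C \<and> {i, j} \<in> C})
      = (\<Sum>j\<in>?N. \<Sum>C\<in>?H. of_bool (P C) * of_bool ({i, j} \<in> C))"
    by (simp only: of_nat_card_filter_eq_sum_of_bool[OF finite_ham_cycles, where 'b = nat, symmetric]
        of_nat_id of_bool_conj[symmetric])
  also have "\<dots> = (\<Sum>C\<in>?H. of_bool (P C) * (\<Sum>j\<in>?N. of_bool ({i, j} \<in> C)))"
    by (simp only: sum.swap[of _ ?N] sum_distrib_left)
  also have "\<dots> = (\<Sum>C\<in>?H. of_bool (P C) * 2)"
  proof (rule sum.cong[OF refl])
    fix C assume "C \<in> ?H"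
    then have "(\<Sum>j\<in>?N. of_bool ({i, j} \<in> C)) = (2::nat)"
      using ham_cycle_degree[of n C i] assms
        of_nat_card_filter_eq_sum_of_bool[of ?N "\<lambda>j. {i, j} \<in> C", where 'b = nat]
      by (simp add: ham_cycles_def)
    then show "of_bool (P C) * (\<Sum>j\<in>?N. of_bool ({i, j} \<in> C)) = of_bool (P C) * (2::nat)"
      by simp
  qed
  also have "\<dots> = 2 * card {C \<in> ?H. P C}"
    by (simp only: mult.commute[of _ 2] sum_distrib_left[symmetric] of_nat_id
        of_nat_card_filter_eq_sum_of_bool[OF finite_ham_cycles, where 'b = nat, symmetric])
  finally show ?thesis .
qed

lemma edge_count_eq:
  assumes "{a, b} \<subseteq> {1..n}" "a \<noteq> b"
  shows "(n - 1) * edge_count n {a, b} = 2 * card (ham_cycles n)"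
proof -
  have "edge_count n {a, j} = edge_count n {a, b}" if "j \<in> {1..n} - {a}" for j
  proof -
    have "transpose j b ` {a, j} = {a, b}" using that assms by simp
    then show ?thesis
      using edge_count_relabel[OF permutes_swap_id[of j "{1..n}" b], of "{a, j}"] that assms by simp
  qed
  then have "(\<Sum>j\<in>{1..n} - {a}. edge_count n {a, j}) = (\<Sum>j\<in>{1..n} - {a}. edge_count n {a, b})"
    by (rule sum.cong[OF refl])
  also have "\<dots> = (n - 1) * edge_count n {a, b}"
    using assms by simp
  finally have "(\<Sum>j\<in>{1..n} - {a}. edge_count n {a, j}) = (n - 1) * edge_count n {a, b}" .
  moreover have "(\<Sum>j\<in>{1..n} - {a}. edge_count n {a, j}) = 2 * card (ham_cycles n)"
    using sum_card_ham_cycles_through_vertex[of a n "\<lambda>_. True"] assms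
    by (simp add: edge_count_def)
  ultimately show ?thesis by simp
qed

lemma pair_count_adjacent:
  assumes "{a, b, c} \<subseteq> {1..n}" "distinct [a, b, c]"
  shows "(n - 2) * pair_count n {a, b} {a, c} = edge_count n {a, b}"
proof -
  let ?N = "{1..n} - {a, b}"
  have split_a: "{1..n} - {a} = insert b ?N" using assms by auto
  have same: "pair_count n {a, b} {a, j} = pair_count n {a, b} {a, c}" if "j \<in> ?N" for j
  proof -
    have "transpose j c ` {a, b} = {a, b}" "transpose j c ` {a, j} = {a, c}"
      using that assms by (auto simp: transpose_def)
    then show ?thesis
      using pair_count_relabel[OF permutes_swap_id[of j "{1..n}" c], of "{a, b}" "{a, j}"] that assms
      by simp
  qed
  have card_N: "card ?N = n - 2"
    using assms by (simp add: card_Diff_subset)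
  have "(\<Sum>j\<in>?N. pair_count n {a, b} {a, j}) = (\<Sum>j\<in>?N. pair_count n {a, b} {a, c})"
    using same by (rule sum.cong[OF refl])
  also have "\<dots> = (n - 2) * pair_count n {a, b} {a, c}"
    by (simp only: sum_constant of_nat_id card_N)
  finally have "(\<Sum>j\<in>?N. pair_count n {a, b} {a, j}) = (n - 2) * pair_count n {a, b} {a, c}" .
  moreover have "(\<Sum>j\<in>{1..n} - {a}. pair_count n {a, b} {a, j}) = 2 * edge_count n {a, b}"
    unfolding pair_count_def edge_count_def
    by (rule sum_card_ham_cycles_through_vertex) (use assms in simp)
  moreover have "(\<Sum>j\<in>{1..n} - {a}. pair_count n {a, b} {a, j})
      = pair_count n {a, b} {a, b} + (\<Sum>j\<in>?N. pair_count n {a, b} {a, j})"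
    unfolding split_a by simp
  ultimately show ?thesis using pair_count_self[of n "{a, b}"] by linarith
qed

lemma pair_count_disjoint:
  assumes "{a, b, c, d} \<subseteq> {1..n}" "distinct [a, b, c, d]"
  shows "(n - 3) * pair_count n {a, b} {c, d} + pair_count n {a, b} {c, a} + pair_count n {a, b} {c, b}
    = 2 * edge_count n {a, b}"
proof -
  let ?N = "{1..n} - {a, b, c}"
  have split_c: "{1..n} - {c} = insert a (insert b ?N)" using assms by auto
  have same: "pair_count n {a, b} {c, j} = pair_count n {a, b} {c, d}" if "j \<in> ?N" for j
  proof -
    have "transpose j d ` {a, b} = {a, b}" "transpose j d ` {c, j} = {c, d}"
      using that assms by (auto simp: transpose_def)
    then show ?thesis
      using pair_count_relabel[OF permutes_swap_id[of j "{1..n}" d], of "{a, b}" "{c, j}"] that assms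
      by simp
  qed
  have card_N: "card ?N = n - 3"
    using assms by (simp add: card_Diff_subset)
  have "(\<Sum>j\<in>?N. pair_count n {a, b} {c, j}) = (\<Sum>j\<in>?N. pair_count n {a, b} {c, d})"
    using same by (rule sum.cong[OF refl])
  also have "\<dots> = (n - 3) * pair_count n {a, b} {c, d}"
    by (simp only: sum_constant of_nat_id card_N)
  finally have "(\<Sum>j\<in>?N. pair_count n {a, b} {c, j}) = (n - 3) * pair_count n {a, b} {c, d}" .
  moreover have "(\<Sum>j\<in>{1..n} - {c}. pair_count n {a, b} {c, j}) = 2 * edge_count n {a, b}"
    unfolding pair_count_def edge_count_def
    by (rule sum_card_ham_cycles_through_vertex) (use assms in simp)
  moreover have "(\<Sum>j\<in>{1..n} - {c}. pair_count n {a, b} {c, j})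
      = pair_count n {a, b} {c, a} + pair_count n {a, b} {c, b} + (\<Sum>j\<in>?N. pair_count n {a, b} {c, j})"
    unfolding split_c using assms by (simp add: add.assoc)
  ultimately show ?thesis by linarith
qed

lemma pair_count_alternating_sum:
  assumes abcd: "{a, b, c, d} \<subseteq> {1..n}" "distinct [a, b, c, d]"
  shows "real (pair_count n {a, b} {a, b}) - pair_count n {a, b} {b, c}
    + pair_count n {a, b} {c, d} - pair_count n {a, b} {d, a} = edge_count n {a, b}"
proof -
  have "4 \<le> n" using length_le_if_distinct_subset[of "[a, b, c, d]" n] abcd by simp
  define p q r where "p = real (edge_count n {a, b})" and "q = p / (real n - 2)"
    and "r = real (pair_count n {a, b} {c, d})"
  have p_eq: "p = (real n - 2) * q" using \<open>4 \<le> n\<close> by (simp add: q_def)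
  have adjacent: "pair_count n {x, y} {x, z} = q"
    if "{x, y} = {a, b}" "{x, y, z} \<subseteq> {1..n}" "distinct [x, y, z]" for x y z
  proof -
    have "(real n - 2) * pair_count n {x, y} {x, z} = (real n - 2) * q"
      using arg_cong[OF pair_count_adjacent[OF that(2,3)], of real] \<open>4 \<le> n\<close> that(1)
      unfolding p_eq[symmetric] p_def by (simp add: of_nat_diff)
    then show ?thesis using \<open>4 \<le> n\<close> by simp
  qed
  have bc: "pair_count n {a, b} {b, c} = q" and da: "pair_count n {a, b} {d, a} = q"
    and ca: "pair_count n {a, b} {c, a} = q" and cb: "pair_count n {a, b} {c, b} = q"
    using adjacent[of b a c] adjacent[of a b d] adjacent[of a b c] abcd
    by (auto simp: insert_commute)
  have "(real n - 3) * r + q + q = 2 * p"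
    using arg_cong[OF pair_count_disjoint[OF abcd], of real] ca cb \<open>4 \<le> n\<close>
    unfolding r_def p_def by (simp add: of_nat_diff)
  then have "(real n - 3) * r = 2 * ((real n - 2) * q) - q - q"
    unfolding p_eq by linarith
  also have "\<dots> = (real n - 3) * (2 * q)"
    by (simp add: algebra_simps)
  finally have "r = 2 * q" using \<open>4 \<le> n\<close> by simp
  then show ?thesis using bc da unfolding r_def p_def by (simp add: pair_count_self)
qed

definition poly_at :: "nat \<Rightarrow> (nat set \<Rightarrow> real) \<Rightarrow> (nat set \<Rightarrow> real) \<Rightarrow> real" where
  "poly_at n v x = (\<Sum>\<nu>\<in>monomials n. mono_eval \<nu> x * v \<nu>)"

lemma finite_edges: "finite (edges n)"
  by (rule finite_subset[of _ "Pow {1..n}"]) (auto simp: edges_def)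

lemma doubleton_in_edges: "i \<in> {1..n} \<Longrightarrow> j \<in> {1..n} \<Longrightarrow> i \<noteq> j \<Longrightarrow> {i, j} \<in> edges n"
  unfolding edges_def by blast

lemma empty_notin_edges: "{} \<notin> edges n"
  by (auto simp: edges_def)

lemma poly_at_eq: "poly_at n v x = v {} + (\<Sum>e\<in>edges n. x e * v e)"
proof -
  have "(\<Sum>e\<in>edges n. mono_eval e x * v e) = (\<Sum>e\<in>edges n. x e * v e)"
    using empty_notin_edges by (intro sum.cong) (auto simp: mono_eval_def)
  then show ?thesis
    by (simp add: poly_at_def monomials_def finite_edges empty_notin_edges mono_eval_def)
qed

lemma sum_mult_delta:
  "finite A \<Longrightarrow> f \<in> A \<Longrightarrow> (\<Sum>e\<in>A. x e * (if e = f then 1 else 0)) = (x f :: 'a::semiring_1)"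
proof -
  assume "finite A" "f \<in> A"
  have "(\<Sum>e\<in>A. x e * (if e = f then 1 else 0)) = (\<Sum>e\<in>A. if e = f then x e else 0)"
    by (rule sum.cong) simp_all
  with \<open>finite A\<close> \<open>f \<in> A\<close> show ?thesis by (simp only: sum.delta if_True)
qed

lemma poly_at_vstar:
  assumes "i \<in> {1..n}"
  shows "poly_at n (vstar n i) x = 2 - (\<Sum>j\<in>{1..n} - {i}. x {i, j})"
proof -
  have star: "{e \<in> edges n. i \<in> e} = (\<lambda>j. {i, j}) ` ({1..n} - {i})"
  proof (intro equalityI subsetI)
    fix e assume "e \<in> {e \<in> edges n. i \<in> e}"
    then obtain x y where e: "e = {x, y}" "x \<in> {1..n}" "y \<in> {1..n}" "x \<noteq> y" and "i \<in> e"
      unfolding edges_def by blast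
    then have "i = x \<or> i = y" by simp
    then show "e \<in> (\<lambda>j. {i, j}) ` ({1..n} - {i})"
    proof
      assume "i = x"
      then show ?thesis using e by (intro image_eqI[of _ _ y]) simp_all
    next
      assume "i = y"
      then show ?thesis using e by (intro image_eqI[of _ _ x]) (simp_all add: insert_commute)
    qed
  next
    fix e assume "e \<in> (\<lambda>j. {i, j}) ` ({1..n} - {i})"
    then obtain j where "j \<in> {1..n} - {i}" "e = {i, j}" by blast
    then show "e \<in> {e \<in> edges n. i \<in> e}" using assms doubleton_in_edges by simp
  qed
  have "(\<Sum>e\<in>edges n. x e * vstar n i e) = (\<Sum>e\<in>edges n. - (if i \<in> e then x e else 0))"
    using empty_notin_edges by (intro sum.cong) (auto simp: vstar_def)
  also have "\<dots> = - (\<Sum>e\<in>{e \<in> edges n. i \<in> e}. x e)"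
    by (simp only: sum_negf sum.inter_filter[OF finite_edges])
  also have "\<dots> = - (\<Sum>j\<in>{1..n} - {i}. x {i, j})"
    unfolding star by (subst sum.reindex) (auto simp: inj_on_def doubleton_eq_iff)
  finally show ?thesis by (simp add: poly_at_eq vstar_def)
qed

lemma poly_at_vsquare:
  assumes "{a, b, c, d} \<subseteq> {1..n}" "distinct [a, b, c, d]"
  shows "poly_at n (vsquare a b c d) x = x {a, b} - x {b, c} + x {c, d} - x {d, a}"
proof -
  have "{a, b} \<in> edges n" "{b, c} \<in> edges n" "{c, d} \<in> edges n" "{d, a} \<in> edges n"
    using assms by (simp_all add: doubleton_in_edges)
  moreover have "vsquare a b c d {} = 0" by (simp add: vsquare_def)
  ultimately show ?thesis
    unfolding poly_at_eq vsquare_def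
    by (simp only: right_diff_distrib distrib_left sum.distrib sum_subtractf
        sum_mult_delta[OF finite_edges] add_0)
qed

lemma inj_incidence: "inj incidence"
proof (rule injI)
  fix C D :: "nat set set"
  assume CD: "incidence C = incidence D"
  have "e \<in> C \<longleftrightarrow> e \<in> D" for e
  proof -
    have "incidence C e = incidence D e" using CD by simp
    then show ?thesis by (simp add: incidence_def split: if_splits)
  qed
  then show "C = D" by blast
qed

lemma card_HC: "card (HC n) = card (ham_cycles n)"
  unfolding HC_def ham_cycles_def by (rule card_image) (rule inj_on_subset[OF inj_incidence], simp)

lemma sum_HC: "(\<Sum>x\<in>HC n. g x) = (\<Sum>C\<in>ham_cycles n. g (incidence C))"
  using sum.reindex[OF inj_on_subset[OF inj_incidence subset_UNIV], of g "ham_cycles n"]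
  by (simp add: HC_def ham_cycles_def)

lemma qmat_mult:
  "(\<Sum>\<nu>\<in>monomials n. qmat n f \<mu> \<nu> * v \<nu>)
    = (\<Sum>x\<in>HC n. f x * mono_eval \<mu> x * poly_at n v x) / card (HC n)"
proof -
  have "(\<Sum>\<nu>\<in>monomials n. qmat n f \<mu> \<nu> * v \<nu>)
      = (\<Sum>\<nu>\<in>monomials n. \<Sum>x\<in>HC n. f x * mono_eval \<mu> x * (mono_eval \<nu> x * v \<nu>)) / card (HC n)"
    by (simp add: qmat_def sum_divide_distrib sum_distrib_right mult.assoc)
  also have "\<dots> = (\<Sum>x\<in>HC n. f x * mono_eval \<mu> x * poly_at n v x) / card (HC n)"
    by (simp only: sum.swap[of _ "monomials n"] sum_distrib_left poly_at_def)
  finally show ?thesis .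
qed

definition moment :: "nat \<Rightarrow> (nat set \<Rightarrow> real) \<Rightarrow> nat set \<Rightarrow> real" where
  "moment n v \<mu> = (\<Sum>C\<in>ham_cycles n. mono_eval \<mu> (incidence C) * poly_at n v (incidence C))"

lemma A_one_mult: "(\<Sum>\<nu>\<in>monomials n. A_one n \<mu> \<nu> * v \<nu>) = moment n v \<mu> / card (ham_cycles n)"
  by (simp add: A_one_def qmat_mult sum_HC card_HC moment_def)

lemma incidence_eq_of_bool: "incidence C e = of_bool (e \<in> C)"
  by (simp add: incidence_def)

lemma sum_incidence_mult:
  "(\<Sum>C\<in>ham_cycles n. incidence C e * incidence C f) = real (pair_count n e f)"
  unfolding incidence_eq_of_bool pair_count_def
  by (simp only: of_bool_conj[symmetric] of_nat_card_filter_eq_sum_of_bool[OF finite_ham_cycles])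

lemma sum_incidence_star:
  assumes "is_ham_cycle n C" "i \<in> {1..n}"
  shows "(\<Sum>j\<in>{1..n} - {i}. incidence C {i, j}) = 2"
proof -
  have "(\<Sum>j\<in>{1..n} - {i}. incidence C {i, j}) = real (card {j \<in> {1..n} - {i}. {i, j} \<in> C})"
    unfolding incidence_eq_of_bool by (rule of_nat_card_filter_eq_sum_of_bool[symmetric]) simp
  then show ?thesis using ham_cycle_degree[OF assms] by simp
qed

lemma mono_eval_relabel:
  "inj \<pi> \<Longrightarrow> mono_eval (\<pi> ` \<mu>) (incidence (relabel \<pi> C)) = mono_eval \<mu> (incidence C)"
  by (simp add: mono_eval_def incidence_def image_mem_relabel_iff)

lemma incidence_relabel_involution:
  assumes "\<sigma> \<circ> \<sigma> = id"
  shows "incidence (relabel \<sigma> C) e = incidence C (\<sigma> ` e)"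
proof -
  have involution: "\<sigma> (\<sigma> x) = x" for x
    using fun_cong[OF assms, of x] by simp
  then have "inj \<sigma>" by (rule inj_on_inverseI)
  moreover have "\<sigma> ` (\<sigma> ` e) = e" by (simp add: image_image involution)
  ultimately show ?thesis
    using image_mem_relabel_iff[of \<sigma> "\<sigma> ` e" C] by (simp add: incidence_def)
qed

lemma moment_vsquare_transpose:
  assumes abcd: "{a, b, c, d} \<subseteq> {1..n}" "distinct [a, b, c, d]"
    and \<sigma>: "\<sigma> = transpose a c \<or> \<sigma> = transpose b d"
  shows "moment n (vsquare a b c d) (\<sigma> ` \<mu>) = - moment n (vsquare a b c d) \<mu>"
proof -
  let ?p = "\<lambda>C. poly_at n (vsquare a b c d) (incidence C)"
  have perm: "\<sigma> permutes {1..n}" using \<sigma> abcd by (auto intro: permutes_swap_id)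
  have p_relabel: "?p (relabel \<sigma> C) = - ?p C" for C
  proof -
    have inc: "incidence (relabel \<sigma> C) e = incidence C (\<sigma> ` e)" for e
      using \<sigma> by (auto intro: incidence_relabel_involution)
    from \<sigma> show ?thesis
    proof
      assume "\<sigma> = transpose a c"
      then have "\<sigma> ` {a, b} = {b, c}" "\<sigma> ` {b, c} = {a, b}" "\<sigma> ` {c, d} = {d, a}" "\<sigma> ` {d, a} = {c, d}"
        using abcd by (simp_all add: insert_commute)
      then show ?thesis by (simp add: poly_at_vsquare[OF abcd] inc)
    next
      assume "\<sigma> = transpose b d"
      then have "\<sigma> ` {a, b} = {d, a}" "\<sigma> ` {b, c} = {c, d}" "\<sigma> ` {c, d} = {b, c}" "\<sigma> ` {d, a} = {a, b}"
        using abcd by (simp_all add: insert_commute)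
      then show ?thesis by (simp add: poly_at_vsquare[OF abcd] inc)
    qed
  qed
  have "moment n (vsquare a b c d) (\<sigma> ` \<mu>)
      = (\<Sum>C\<in>ham_cycles n. mono_eval (\<sigma> ` \<mu>) (incidence (relabel \<sigma> C)) * ?p (relabel \<sigma> C))"
    unfolding moment_def
    by (rule sum_ham_cycles_relabel[OF perm, of "\<lambda>C. mono_eval (\<sigma> ` \<mu>) (incidence C) * ?p C", symmetric])
  also have "\<dots> = - moment n (vsquare a b c d) \<mu>"
    using mono_eval_relabel[OF permutes_inj[OF perm]] p_relabel by (simp add: moment_def sum_negf)
  finally show ?thesis .
qed

lemma moment_vsquare_first_edge:
  assumes abcd: "{a, b, c, d} \<subseteq> {1..n}" "distinct [a, b, c, d]"
  shows "moment n (vsquare a b c d) {a, b} = edge_count n {a, b}"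
proof -
  let ?i = "\<lambda>C e. incidence C e"
  have "moment n (vsquare a b c d) {a, b}
      = (\<Sum>C\<in>ham_cycles n. ?i C {a, b} * (?i C {a, b} - ?i C {b, c} + ?i C {c, d} - ?i C {d, a}))"
    unfolding moment_def poly_at_vsquare[OF abcd] by (simp add: mono_eval_def)
  also have "\<dots> = real (pair_count n {a, b} {a, b}) - pair_count n {a, b} {b, c}
      + pair_count n {a, b} {c, d} - pair_count n {a, b} {d, a}"
    by (simp only: ring_distribs sum.distrib sum_subtractf sum_incidence_mult)
  also have "\<dots> = edge_count n {a, b}"
    by (rule pair_count_alternating_sum[OF abcd])
  finally show ?thesis .
qed

lemma moment_vsquare:
  assumes abcd: "{a, b, c, d} \<subseteq> {1..n}" "distinct [a, b, c, d]" and \<mu>: "\<mu> \<in> monomials n"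
  shows "moment n (vsquare a b c d) \<mu> = edge_count n {a, b} * vsquare a b c d \<mu>"
proof -
  let ?M = "moment n (vsquare a b c d)" and ?e = "real (edge_count n {a, b})"
  have ac: "?M (transpose a c ` \<nu>) = - ?M \<nu>" and bd: "?M (transpose b d ` \<nu>) = - ?M \<nu>" for \<nu>
    using moment_vsquare_transpose[OF abcd] by blast+
  have ab: "?M {a, b} = ?e" by (rule moment_vsquare_first_edge[OF abcd])
  have "transpose a c ` {a, b} = {b, c}" "transpose b d ` {a, b} = {d, a}"
    "transpose a c ` {d, a} = {c, d}"
    using abcd by (simp_all add: insert_commute)
  then have bc: "?M {b, c} = - ?e" and da: "?M {d, a} = - ?e" and cd: "?M {c, d} = ?e"
    using ac[of "{a, b}"] bd[of "{a, b}"] ac[of "{d, a}"] ab by simp_all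
  consider "a \<notin> \<mu> \<and> c \<notin> \<mu>" | "b \<notin> \<mu> \<and> d \<notin> \<mu>" | "\<mu> \<in> {{a, b}, {b, c}, {c, d}, {d, a}}"
  proof (cases "\<mu> = {}")
    case False
    then obtain x y where xy: "\<mu> = {x, y}" using \<mu> unfolding monomials_def edges_def by blast
    have "\<mu> \<in> {{a, b}, {b, c}, {c, d}, {d, a}}" if "a \<in> \<mu> \<or> c \<in> \<mu>" "b \<in> \<mu> \<or> d \<in> \<mu>"
      using that abcd unfolding xy by (auto simp: doubleton_eq_iff)
    then show thesis using that by blast
  qed (use that in blast)
  then show ?thesis
  proof cases
    case 1
    then have "?M \<mu> = 0" using ac[of \<mu>] by simp
    moreover have "vsquare a b c d \<mu> = 0" using 1 by (auto simp: vsquare_def)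
    ultimately show ?thesis by simp
  next
    case 2
    then have "?M \<mu> = 0" using bd[of \<mu>] by simp
    moreover have "vsquare a b c d \<mu> = 0" using 2 by (auto simp: vsquare_def)
    ultimately show ?thesis by simp
  next
    case 3
    then show ?thesis using abcd ab bc cd da by (auto simp: vsquare_def doubleton_eq_iff)
  qed
qed

lemma vstar_eigenvector:
  assumes "i \<in> {1..n}"
  shows "is_eigenvector n (A_one n) (vstar n i) 0"
  unfolding is_eigenvector_def
proof (intro conjI ballI)
  show "\<exists>\<mu>\<in>monomials n. vstar n i \<mu> \<noteq> 0"
    by (intro bexI[of _ "{}"]) (simp_all add: vstar_def monomials_def)
next
  fix \<mu>
  have "poly_at n (vstar n i) (incidence C) = 0" if "C \<in> ham_cycles n" for C
    using that sum_incidence_star[of n C i] assms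
    unfolding poly_at_vstar[OF assms] ham_cycles_def by simp
  then show "(\<Sum>\<nu>\<in>monomials n. A_one n \<mu> \<nu> * vstar n i \<nu>) = 0 * vstar n i \<mu>"
    by (simp add: A_one_mult moment_def)
qed

lemma vsquare_eigenvector:
  assumes abcd: "{a, b, c, d} \<subseteq> {1..n}" "distinct [a, b, c, d]"
  shows "is_eigenvector n (A_one n) (vsquare a b c d) (2 / (real n - 1))"
  unfolding is_eigenvector_def
proof (intro conjI ballI)
  have "{a, b} \<in> monomials n" using abcd by (simp add: monomials_def doubleton_in_edges)
  moreover have "vsquare a b c d {a, b} \<noteq> 0" using abcd by (simp add: vsquare_def doubleton_eq_iff)
  ultimately show "\<exists>\<mu>\<in>monomials n. vsquare a b c d \<mu> \<noteq> 0" by blast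
next
  fix \<mu> assume \<mu>: "\<mu> \<in> monomials n"
  have "4 \<le> n" using length_le_if_distinct_subset[of "[a, b, c, d]" n] abcd by simp
  define h where "h = real (card (ham_cycles n))"
  have "h > 0" using ham_cycles_nonempty finite_ham_cycles \<open>4 \<le> n\<close>
    by (simp add: h_def card_gt_0_iff)
  have "(real n - 1) * edge_count n {a, b} = 2 * h"
    using arg_cong[OF edge_count_eq[of a b n], of real] abcd \<open>4 \<le> n\<close>
    by (simp add: h_def of_nat_diff)
  then have "edge_count n {a, b} = 2 / (real n - 1) * h"
    using \<open>4 \<le> n\<close> by (simp add: field_simps)
  then show "(\<Sum>\<nu>\<in>monomials n. A_one n \<mu> \<nu> * vsquare a b c d \<nu>) = 2 / (real n - 1) * vsquare a b c d \<mu>"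
    using \<open>h > 0\<close> by (simp add: A_one_mult moment_vsquare[OF abcd \<mu>] h_def)
qed

theorem lemma4:
  fixes n :: nat
  assumes "3 \<le> n"
  shows "(\<forall>i\<in>{1..n}. is_eigenvector n (A_one n) (vstar n i) 0) \<and>
         (\<forall>a\<in>{1..n}. \<forall>b\<in>{1..n}. \<forall>c\<in>{1..n}. \<forall>d\<in>{1..n}.
            distinct [a, b, c, d] \<longrightarrow>
            is_eigenvector n (A_one n) (vsquare a b c d) (2 / (real n - 1)))"
  using vstar_eigenvector vsquare_eigenvector by simp

end
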